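(* Let $n,m$ be integers with $0<m<n$. Then $\mathcal{W}_n^m=\mathrm{span}\{\tilde\psi_{n,k}^m:\ k=1,\ldots,2n\}$ and $$\langle\tilde\psi_{n,k}^m,\tilde\psi_{n,h}^m\rangle_{L^2_w}=\delta_{k,h},\qquad k,h=1,\ldots,2n.$$
   Context: Let $w(x)=(1-x^2)^{-1/2}$ on $[-1,1]$ and $\langle f,g\rangle_{L^2_w}=\int_{-1}^1 fgw\,dx$. The orthonormal Chebyshev polynomials are $p_0=\sqrt{1/\pi}$, $p_r(x)=\sqrt{2/\pi}\cos(r\arccos x)$, $r\ge1$. Chebyshev nodes $X_N=\{x_k^N=\cos\frac{(2k-1)\pi}{2N}:k=1,\ldots,N\}$; note $X_n\subset X_{3n}$, and $Y_n=X_{3n}\setminus X_n=\{y_k^n:k=1,\ldots,2n\}$ (in some fixed enumeration). For $0<m<N$: $\mu_{N,r}^m=1$ if $0\le r\le N-m$, $\frac{m+N-r}{2m}$ if $N-m<r<N+m$, $0$ otherwise; for $r=0,\ldots,N-1$, $q_{N,r}^m=p_r$ if $r\le N-m$ and $q_{N,r}^m=\mu_{N,r}^mp_r-\mu_{N,2N-r}^mp_{2N-r}$ if $N-m<r<N$. Let $\mathcal{V}_N^m=\mathrm{span}\{q_{N,r}^m\}_{r=0}^{N-1}$; then $\mathcal{V}_n^m\subset\mathcal{V}_{3n}^m$ and $\mathcal{W}_n^m$ denotes the orthogonal complement of $\mathcal{V}_n^m$ in $\mathcal{V}_{3n}^m$ w.r.t. $\langle\cdot,\cdot\rangle_{L^2_w}$.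 For $r=n,\ldots,3n-1$ define $\tilde q_{n,r}^m=\mu_{n,r}^mp_{2n-r}+\mu_{n,2n-r}^mp_r$ if $n\le r<n+m$, $\tilde q_{n,r}^m=p_r$ if $n+m\le r\le3n-m$, $\tilde q_{n,r}^m=q_{3n,r}^m=\mu_{3n,r}^mp_r-\mu_{3n,6n-r}^mp_{6n-r}$ if $3n-m<r<3n$; and $v_{n,r}^m=\frac{m^2+(n-r)^2}{2m^2}$ if $n<r<n+m$, $v_{n,r}^m=1$ if $r=n$ or $n+m\le r\le3n-m$, $v_{n,r}^m=\frac{m^2+(3n-r)^2}{2m^2}$ if $3n-m<r<3n$. For $k=1,\ldots,2n$ let $\sigma_{r,k}^n=\sqrt{\frac{\pi}{3n}}\cdot c_{r,k}$ where $c_{r,k}=p_n(y_k^n)$ if $r=n$, $\frac{p_r(y_k^n)+p_{2n-r}(y_k^n)}{\sqrt2}$ if $n<r<2n$, $\frac{p_{2n}(y_k^n)+\sqrt2p_0(y_k^n)}{\sqrt3}$ if $r=2n$, $\sqrt{3/2}\,p_r(y_k^n)$ if $2n<r<3n$. The orthonormal VP wavelets are $\tilde\psi_{n,k}^m(x)=\sum_{r=n}^{3n-1}\sigma_{r,k}^n\,\tilde q_{n,r}^m(x)/\sqrt{v_{n,r}^m}$, $k=1,\ldots,2n$. *)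

theory Defs
  imports "HOL-Analysis.Analysis"
begin

definition cheb_inner :: "(real \<Rightarrow> real) \<Rightarrow> (real \<Rightarrow> real) \<Rightarrow> real" where
  "cheb_inner f g = (LINT x:{-1<..<1}|lborel. f x * g x / sqrt (1 - x\<^sup>2))"

definition cheb_p :: "nat \<Rightarrow> real \<Rightarrow> real" where
  "cheb_p r x = (if r = 0 then sqrt (1 / pi) else sqrt (2 / pi) * cos (real r * arccos x))"

definition cheb_nodes :: "nat \<Rightarrow> real set" where
  "cheb_nodes N = (\<lambda>k. cos ((2 * real k - 1) * pi / (2 * real N))) ` {1..N}"

definition Y_nodes :: "nat \<Rightarrow> real set" where
  "Y_nodes n = cheb_nodes (3 * n) - cheb_nodes n"

definition lin_span :: "'i set \<Rightarrow> ('i \<Rightarrow> real \<Rightarrow> real) \<Rightarrow> (real \<Rightarrow> real) set" where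
  "lin_span I g = {\<lambda>x. \<Sum>i\<in>I. c i * g i x | c. True}"

definition mu :: "nat \<Rightarrow> nat \<Rightarrow> nat \<Rightarrow> real" where
  "mu N m r = (if r \<le> N - m then 1
     else if r < N + m then (real m + real N - real r) / (2 * real m) else 0)"

definition qf :: "nat \<Rightarrow> nat \<Rightarrow> nat \<Rightarrow> real \<Rightarrow> real" where
  "qf N m r = (if r \<le> N - m then cheb_p r
     else (\<lambda>x. mu N m r * cheb_p r x - mu N m (2 * N - r) * cheb_p (2 * N - r) x))"

definition V_space :: "nat \<Rightarrow> nat \<Rightarrow> (real \<Rightarrow> real) set" where
  "V_space N m = lin_span {..<N} (qf N m)"

definition W_space :: "nat \<Rightarrow> nat \<Rightarrow> (real \<Rightarrow> real) set" where
  "W_space n m = {f \<in> V_space (3 * n) m. \<forall>g \<in> V_space n m. cheb_inner f g = 0}"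

definition tq :: "nat \<Rightarrow> nat \<Rightarrow> nat \<Rightarrow> real \<Rightarrow> real" where
  "tq n m r = (if n \<le> r \<and> r < n + m then
        (\<lambda>x. mu n m r * cheb_p (2 * n - r) x + mu n m (2 * n - r) * cheb_p r x)
     else if n + m \<le> r \<and> r \<le> 3 * n - m then cheb_p r
     else (\<lambda>x. mu (3 * n) m r * cheb_p r x - mu (3 * n) m (6 * n - r) * cheb_p (6 * n - r) x))"

definition vv :: "nat \<Rightarrow> nat \<Rightarrow> nat \<Rightarrow> real" where
  "vv n m r = (if n < r \<and> r < n + m then
        ((real m)\<^sup>2 + (real n - real r)\<^sup>2) / (2 * (real m)\<^sup>2)
     else if r = n \<or> (n + m \<le> r \<and> r \<le> 3 * n - m) then 1
     else ((real m)\<^sup>2 + (3 * real n - real r)\<^sup>2) / (2 * (real m)\<^sup>2))"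

text \<open>c_{r,k}, with y the fixed enumeration of Y_n (so y k = y_k^n).\<close>
definition cc :: "nat \<Rightarrow> (nat \<Rightarrow> real) \<Rightarrow> nat \<Rightarrow> nat \<Rightarrow> real" where
  "cc n y r k = (if r = n then cheb_p n (y k)
     else if n < r \<and> r < 2 * n then (cheb_p r (y k) + cheb_p (2 * n - r) (y k)) / sqrt 2
     else if r = 2 * n then (cheb_p (2 * n) (y k) + sqrt 2 * cheb_p 0 (y k)) / sqrt 3
     else sqrt (3 / 2) * cheb_p r (y k))"

definition sigma :: "nat \<Rightarrow> (nat \<Rightarrow> real) \<Rightarrow> nat \<Rightarrow> nat \<Rightarrow> real" where
  "sigma n y r k = sqrt (pi / (3 * real n)) * cc n y r k"

definition psi :: "nat \<Rightarrow> nat \<Rightarrow> (nat \<Rightarrow> real) \<Rightarrow> nat \<Rightarrow> real \<Rightarrow> real" where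
  "psi n m y k x = (\<Sum>r\<in>{n..<3 * n}. sigma n y r k * tq n m r x / sqrt (vv n m r))"

end

(*
  Everything is computed on coefficient vectors with respect to the orthonormal basis p_r:
  the substitution x = cos t shows that the p_r are orthonormal in L^2_w, so the inner
  product of two finite Chebyshev series is the dot product of their coefficients. In these
  coordinates the normalised tilde q_{n,r}, n <= r < 3n, form an orthonormal family in
  V_{3n}^m orthogonal to V_n^m, and no nonzero element of V_{3n}^m is orthogonal both to them
  and to the q_{n,j}, j < n; so they are an orthonormal basis of W_n^m. The wavelets are
  obtained from this basis by the 2n x 2n matrix (sigma_{r,k}). Its columns are orthonormal
  by the discrete orthogonality of cosines, writing the sum over Y_n as the sum over X_{3n}
  minus the sum over X_n; hence the matrix is orthogonal, and the wavelets are orthonormal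
  and span W_n^m.
*)
theory Submission
  imports Defs "Jordan_Normal_Form.Determinant"
begin

section \<open>Orthonormality of the Chebyshev polynomials\<close>

lemma set_integral_arccos_substitution_nonneg:
  fixes G g :: "real \<Rightarrow> real"
  assumes G: "\<And>t. (G has_real_derivative g t) (at t)" and g: "continuous_on UNIV g"
    and g_nonneg: "\<And>t. 0 \<le> g t"
  shows "set_integrable lborel {-1<..<1} (\<lambda>x. g (arccos x) / sqrt (1 - x\<^sup>2))"
    and "(LINT x:{-1<..<1}|lborel. g (arccos x) / sqrt (1 - x\<^sup>2)) = G pi - G 0"
proof -
  define F where "F = (\<lambda>x. - G (arccos x))"
  have G_cont: "isCont G t" for t
    using G by (rule DERIV_isCont)
  have F_deriv: "(F has_real_derivative g (arccos x) / sqrt (1 - x\<^sup>2)) (at x)"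
    if "-1 < x" "x < 1" for x
    using DERIV_minus[OF DERIV_chain2[OF G DERIV_arccos[OF that]]]
    by (simp add: F_def divide_inverse)
  have integrand_cont: "isCont (\<lambda>x. g (arccos x) / sqrt (1 - x\<^sup>2)) x" if "-1 < x" "x < 1" for x
  proof -
    have "1 - x\<^sup>2 > 0" using that by (simp add: abs_square_less_1)
    moreover have "isCont (\<lambda>x. g (arccos x)) x"
      using isCont_arccos[OF that] g
      by (metis UNIV_I continuous_on_eq_continuous_at isCont_o2 open_UNIV)
    ultimately show ?thesis by (intro continuous_intros) auto
  qed
  have nonneg: "AE x in lborel. ereal (-1) < ereal x \<longrightarrow> ereal x < ereal 1
      \<longrightarrow> 0 \<le> g (arccos x) / sqrt (1 - x\<^sup>2)"
    by (intro AE_I2 impI divide_nonneg_nonneg g_nonneg) (auto simp: abs_square_le_1)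
  have arccos_cont: "(arccos \<longlongrightarrow> arccos x) (at x within {-1..1})" if "x \<in> {-1..1}" for x
    using continuous_on_arccos' that unfolding continuous_on_def by blast
  have lim_left: "((F \<circ> real_of_ereal) \<longlongrightarrow> - G pi) (at_right (ereal (-1)))"
    using arccos_cont[of "-1"]
    unfolding ereal_tendsto_simps1 F_def
    by (intro tendsto_minus isCont_tendsto_compose[OF G_cont]) (simp add: at_within_Icc_at_right)
  have lim_right: "((F \<circ> real_of_ereal) \<longlongrightarrow> - G 0) (at_left (ereal 1))"
    using arccos_cont[of 1]
    unfolding ereal_tendsto_simps1 F_def
    by (intro tendsto_minus isCont_tendsto_compose[OF G_cont]) (simp add: at_within_Icc_at_left)
  note FTC = interval_integral_FTC_nonneg[OF _ _ _ nonneg lim_left lim_right]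
  show "set_integrable lborel {-1<..<1} (\<lambda>x. g (arccos x) / sqrt (1 - x\<^sup>2))"
    using FTC F_deriv integrand_cont by simp
  show "(LINT x:{-1<..<1}|lborel. g (arccos x) / sqrt (1 - x\<^sup>2)) = G pi - G 0"
    using FTC F_deriv integrand_cont by (simp add: interval_lebesgue_integral_def)
qed

text \<open>The library's improper-integral FTC needs a nonnegative integrand; a bounded one is
  reduced to that case by adding a constant.\<close>
lemma set_integral_arccos_substitution:
  fixes G g :: "real \<Rightarrow> real"
  assumes G: "\<And>t. (G has_real_derivative g t) (at t)" and g: "continuous_on UNIV g"
    and g_bounded: "\<And>t. \<bar>g t\<bar> \<le> C"
  shows "set_integrable lborel {-1<..<1} (\<lambda>x. g (arccos x) / sqrt (1 - x\<^sup>2))"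
    and "(LINT x:{-1<..<1}|lborel. g (arccos x) / sqrt (1 - x\<^sup>2)) = G pi - G 0"
proof -
  have "0 \<le> C" using g_bounded[of 0] by linarith
  have shifted: "((\<lambda>t. G t + C * t) has_real_derivative g t + C) (at t)" for t
    using G by (auto intro!: derivative_eq_intros)
  have const: "((\<lambda>t. C * t) has_real_derivative C) (at t)" for t
    by (auto intro!: derivative_eq_intros)
  have "0 \<le> g t + C" for t
    using g_bounded[of t] by linarith
  note I1 = set_integral_arccos_substitution_nonneg[OF shifted _ this]
  note I2 = set_integral_arccos_substitution_nonneg[OF const _ \<open>0 \<le> C\<close>]
  have cont: "continuous_on UNIV (\<lambda>t. g t + C)"
    using g by (intro continuous_intros)
  have eq: "(\<lambda>x. g (arccos x) / sqrt (1 - x\<^sup>2))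
      = (\<lambda>x. (g (arccos x) + C) / sqrt (1 - x\<^sup>2) - C / sqrt (1 - x\<^sup>2))"
    by (simp add: add_divide_distrib)
  show "set_integrable lborel {-1<..<1} (\<lambda>x. g (arccos x) / sqrt (1 - x\<^sup>2))"
    unfolding eq using I1(1)[OF cont] I2(1) by (intro set_integral_diff) auto
  show "(LINT x:{-1<..<1}|lborel. g (arccos x) / sqrt (1 - x\<^sup>2)) = G pi - G 0"
    unfolding eq using I1[OF cont] I2 by (subst set_integral_diff) (auto simp: algebra_simps)
qed

lemma set_integral_cos_mult_cos_arccos:
  fixes r s :: nat
  shows "set_integrable lborel {-1<..<1}
      (\<lambda>x. cos (r * arccos x) * cos (s * arccos x) / sqrt (1 - x\<^sup>2))"
    and "(LINT x:{-1<..<1}|lborel. cos (r * arccos x) * cos (s * arccos x) / sqrt (1 - x\<^sup>2))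
      = (if r = s then (if r = 0 then pi else pi / 2) else 0)"
proof -
  define S where "S j t = (if j = 0 then t else sin (j * t) / j)" for j t :: real
  have S: "(S j has_real_derivative cos (j * t)) (at t)" for j t
  proof (cases "j = 0")
    case True
    then show ?thesis by (simp add: S_def[abs_def])
  next
    case False
    then have "((\<lambda>t. sin (j * t) / j) has_real_derivative cos (j * t)) (at t)"
      by (auto intro!: derivative_eq_intros)
    with False show ?thesis by (simp add: S_def[abs_def])
  qed
  define G where "G t = (S (real r - real s) t + S (real r + real s) t) / 2" for t
  have G: "(G has_real_derivative cos (r * t) * cos (s * t)) (at t)" for t :: real
  proof -
    have "(G has_real_derivative
        (cos ((real r - real s) * t) + cos ((real r + real s) * t)) / 2) (at t)"
      unfolding G_def by (intro DERIV_cdivide DERIV_add S)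
    then show ?thesis by (simp add: cos_times_cos algebra_simps)
  qed
  have bounded: "\<bar>cos (r * t) * cos (s * t)\<bar> \<le> 1" for t :: real
    by (simp add: abs_mult mult_le_one)
  have "continuous_on UNIV (\<lambda>t::real. cos (r * t) * cos (s * t))"
    by (intro continuous_intros)
  note I = set_integral_arccos_substitution[OF G this bounded]
  show "set_integrable lborel {-1<..<1}
      (\<lambda>x. cos (r * arccos x) * cos (s * arccos x) / sqrt (1 - x\<^sup>2))"
    using I(1) by blast
  have S_pi: "S j pi = (if j = 0 then pi else 0)" if "j \<in> \<int>" for j
    using that sin_times_pi_eq_0[of j] by (auto simp: S_def mult.commute)
  have "G pi
      = ((if real r - real s = 0 then pi else 0) + (if real r + real s = 0 then pi else 0)) / 2"
    unfolding G_def using S_pi[of "real r - real s"] S_pi[of "real r + real s"] by simp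
  moreover have "G 0 = 0"
    by (simp add: G_def S_def)
  ultimately have "G pi - G 0 = (if r = s then (if r = 0 then pi else pi / 2) else 0)"
    by auto
  then show "(LINT x:{-1<..<1}|lborel. cos (r * arccos x) * cos (s * arccos x) / sqrt (1 - x\<^sup>2))
      = (if r = s then (if r = 0 then pi else pi / 2) else 0)"
    using I(2) by simp
qed

definition cheb_scale :: "nat \<Rightarrow> real" where
  "cheb_scale r = (if r = 0 then sqrt (1 / pi) else sqrt (2 / pi))"

lemma cheb_p_eq: "cheb_p r x = cheb_scale r * cos (real r * arccos x)"
  by (simp add: cheb_p_def cheb_scale_def)

lemma cheb_p_cos: "0 \<le> t \<Longrightarrow> t \<le> pi \<Longrightarrow> cheb_p r (cos t) = cheb_scale r * cos (real r * t)"
  by (simp add: cheb_p_eq arccos_cos)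

lemma cheb_p_orthonormal:
  shows "set_integrable lborel {-1<..<1} (\<lambda>x. cheb_p i x * cheb_p j x / sqrt (1 - x\<^sup>2))"
    and "cheb_inner (cheb_p i) (cheb_p j) = (if i = j then 1 else 0)"
proof -
  have eq: "(\<lambda>x. cheb_p i x * cheb_p j x / sqrt (1 - x\<^sup>2)) =
      (\<lambda>x. cos (i * arccos x) * cos (j * arccos x) / sqrt (1 - x\<^sup>2)
        * (cheb_scale i * cheb_scale j))"
    by (auto simp: cheb_p_eq fun_eq_iff)
  show "set_integrable lborel {-1<..<1} (\<lambda>x. cheb_p i x * cheb_p j x / sqrt (1 - x\<^sup>2))"
    unfolding eq using set_integral_cos_mult_cos_arccos(1) by (rule set_integrable_mult_left)
  have "cheb_inner (cheb_p i) (cheb_p j)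
      = (if i = j then (if i = 0 then pi else pi / 2) else 0) * (cheb_scale i * cheb_scale j)"
    unfolding cheb_inner_def eq
    by (simp only: set_integral_mult_left set_integral_cos_mult_cos_arccos(2))
  also have "\<dots> = (if i = j then 1 else 0)"
    using pi_gt_zero by (auto simp: cheb_scale_def real_sqrt_mult[symmetric])
  finally show "cheb_inner (cheb_p i) (cheb_p j) = (if i = j then 1 else 0)" .
qed

lemma set_integral_sum:
  fixes f :: "'i \<Rightarrow> 'a \<Rightarrow> real"
  assumes "\<And>i. i \<in> I \<Longrightarrow> set_integrable M A (f i)"
  shows "set_integrable M A (\<lambda>x. \<Sum>i\<in>I. f i x)"
    and "(LINT x:A|M. (\<Sum>i\<in>I. f i x)) = (\<Sum>i\<in>I. LINT x:A|M. f i x)"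
  using assms
  by (simp_all add: set_integrable_def set_lebesgue_integral_def sum_distrib_left integral_sum)

definition coeff_inner :: "nat \<Rightarrow> (nat \<Rightarrow> real) \<Rightarrow> (nat \<Rightarrow> real) \<Rightarrow> real" where
  "coeff_inner L a b = (\<Sum>j<L. a j * b j)"

definition cheb_series :: "nat \<Rightarrow> (nat \<Rightarrow> real) \<Rightarrow> real \<Rightarrow> real" where
  "cheb_series L a x = (\<Sum>i<L. a i * cheb_p i x)"

lemma cheb_inner_cheb_series:
  "cheb_inner (cheb_series L a) (cheb_series L b) = coeff_inner L a b"
proof -
  define h where "h i j x = a i * b j * (cheb_p i x * cheb_p j x / sqrt (1 - x\<^sup>2))" for i j x
  have eq: "(\<lambda>x. cheb_series L a x * cheb_series L b x / sqrt (1 - x\<^sup>2))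
      = (\<lambda>x. \<Sum>i<L. \<Sum>j<L. h i j x)"
    by (auto simp: fun_eq_iff h_def cheb_series_def sum_product sum_divide_distrib mult_ac)
  have int: "set_integrable lborel {-1<..<1} (h i j)" for i j
    unfolding h_def using cheb_p_orthonormal(1) by (rule set_integrable_mult_right)
  have val: "(LINT x:{-1<..<1}|lborel. h i j x) = a i * b j * (if i = j then 1 else 0)" for i j
    using cheb_p_orthonormal(2)[of i j] unfolding h_def cheb_inner_def
    by (simp only: set_integral_mult_right)
  have "cheb_inner (cheb_series L a) (cheb_series L b)
      = (\<Sum>i<L. \<Sum>j<L. a i * b j * (if i = j then 1 else 0))"
    unfolding cheb_inner_def eq
    by (simp add: set_integral_sum int val)
  also have "\<dots> = coeff_inner L a b"
    by (simp add: coeff_inner_def if_distrib cong: if_cong)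
  finally show ?thesis .
qed

section \<open>Coefficient vectors\<close>

definition unit_coeff :: "nat \<Rightarrow> nat \<Rightarrow> real" where
  "unit_coeff a j = (if j = a then 1 else 0)"

definition pair_coeff :: "real \<Rightarrow> nat \<Rightarrow> real \<Rightarrow> nat \<Rightarrow> nat \<Rightarrow> real" where
  "pair_coeff c a d b j = c * unit_coeff a j + d * unit_coeff b j"

lemma sum_unit_coeff_mult:
  assumes "a < L"
  shows "(\<Sum>j<L. unit_coeff a j * g j) = g a"
proof -
  have "(\<Sum>j<L. unit_coeff a j * g j) = (\<Sum>j<L. if j = a then g a else 0)"
    by (rule sum.cong) (auto simp: unit_coeff_def)
  with assms show ?thesis
    by simp
qed

lemma coeff_inner_commute: "coeff_inner L u v = coeff_inner L v u"
  unfolding coeff_inner_def by (simp add: mult.commute)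

lemma coeff_inner_unit_coeff_left: "a < L \<Longrightarrow> coeff_inner L (unit_coeff a) u = u a"
  by (simp add: coeff_inner_def sum_unit_coeff_mult)

lemma coeff_inner_unit_coeff_right: "a < L \<Longrightarrow> coeff_inner L u (unit_coeff a) = u a"
  by (simp add: coeff_inner_commute[of L u] coeff_inner_unit_coeff_left)

lemma coeff_inner_pair_coeff_right:
  assumes "a < L" "b < L"
  shows "coeff_inner L u (pair_coeff c a d b) = c * u a + d * u b"
proof -
  have "coeff_inner L u (pair_coeff c a d b)
      = c * (\<Sum>j<L. unit_coeff a j * u j) + d * (\<Sum>j<L. unit_coeff b j * u j)"
    by (simp add: coeff_inner_def pair_coeff_def algebra_simps sum.distrib sum_distrib_left)
  with assms show ?thesis
    by (simp add: sum_unit_coeff_mult)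
qed

lemma coeff_inner_pair_coeff_left:
  "a < L \<Longrightarrow> b < L \<Longrightarrow> coeff_inner L (pair_coeff c a d b) u = c * u a + d * u b"
  by (simp add: coeff_inner_commute[of L _ u] coeff_inner_pair_coeff_right)

lemmas coeff_inner_simps = coeff_inner_unit_coeff_left coeff_inner_unit_coeff_right
  coeff_inner_pair_coeff_left coeff_inner_pair_coeff_right pair_coeff_def unit_coeff_def

lemma coeff_inner_lincomb_left:
  "coeff_inner L (\<lambda>j. \<Sum>i\<in>I. c i * v i j) w = (\<Sum>i\<in>I. c i * coeff_inner L (v i) w)"
  unfolding coeff_inner_def
  by (simp add: sum_distrib_left sum_distrib_right mult.assoc) (rule sum.swap)

lemma coeff_inner_lincomb_right:
  "coeff_inner L w (\<lambda>j. \<Sum>i\<in>I. c i * v i j) = (\<Sum>i\<in>I. c i * coeff_inner L w (v i))"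
  by (simp add: coeff_inner_commute[of L w] coeff_inner_lincomb_left)

lemma coeff_inner_diff_left:
  "coeff_inner L (\<lambda>j. u j - v j) w = coeff_inner L u w - coeff_inner L v w"
  unfolding coeff_inner_def by (simp add: algebra_simps sum_subtractf)

lemma cheb_series_unit_coeff: "a < L \<Longrightarrow> cheb_series L (unit_coeff a) x = cheb_p a x"
  by (simp add: cheb_series_def sum_unit_coeff_mult)

lemma cheb_series_pair_coeff:
  "a < L \<Longrightarrow> b < L \<Longrightarrow> cheb_series L (pair_coeff c a d b) x = c * cheb_p a x + d * cheb_p b x"
  using coeff_inner_pair_coeff_left[of a L b c d "\<lambda>j. cheb_p j x"]
  by (simp add: cheb_series_def coeff_inner_def)

lemma cheb_series_lincomb:
  "cheb_series L (\<lambda>j. \<Sum>i\<in>I. c i * v i j) x = (\<Sum>i\<in>I. c i * cheb_series L (v i) x)"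
  using coeff_inner_lincomb_left[of L c v I "\<lambda>j. cheb_p j x"]
  by (simp add: cheb_series_def coeff_inner_def)

lemma cheb_series_cong: "(\<And>j. j < L \<Longrightarrow> a j = b j) \<Longrightarrow> cheb_series L a = cheb_series L b"
  unfolding cheb_series_def by (auto intro!: sum.cong)

section \<open>The functions q and tilde q\<close>

definition qf_coeffs :: "nat \<Rightarrow> nat \<Rightarrow> nat \<Rightarrow> nat \<Rightarrow> real" where
  "qf_coeffs N m r = (if r \<le> N - m then unit_coeff r
     else pair_coeff (mu N m r) r (- mu N m (2 * N - r)) (2 * N - r))"

definition tq_coeffs :: "nat \<Rightarrow> nat \<Rightarrow> nat \<Rightarrow> nat \<Rightarrow> real" where
  "tq_coeffs n m r = (if n \<le> r \<and> r < n + m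
       then pair_coeff (mu n m r) (2 * n - r) (mu n m (2 * n - r)) r
     else if n + m \<le> r \<and> r \<le> 3 * n - m then unit_coeff r
     else qf_coeffs (3 * n) m r)"

lemma qf_eq_cheb_series: "r < N \<Longrightarrow> 2 * N \<le> L \<Longrightarrow> qf N m r = cheb_series L (qf_coeffs N m r)"
  by (auto simp: fun_eq_iff qf_def qf_coeffs_def cheb_series_unit_coeff cheb_series_pair_coeff)

lemma mu_transition:
  "N - m < r \<Longrightarrow> r < N + m \<Longrightarrow> mu N m r = (real m + (real N - real r)) / (2 * real m)"
  by (simp add: mu_def)

lemma mu_transition_reflect:
  assumes "m \<le> N" "N - m < r" "r < N + m"
  shows "mu N m (2 * N - r) = (real m - (real N - real r)) / (2 * real m)"
proof -
  have "N - m < 2 * N - r" "2 * N - r < N + m" "r \<le> 2 * N"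
    using assms by arith+
  then show ?thesis by (simp add: mu_transition)
qed

lemma mu_transition_pos: "0 < m \<Longrightarrow> N - m < r \<Longrightarrow> r < N + m \<Longrightarrow> 0 < mu N m r"
  by (simp add: mu_transition)

lemma wavelet_index_cases:
  fixes m n r :: nat
  assumes "m < n" "n \<le> r" "r < 3 * n"
  obtains (lower) "n \<le> r" "r < n + m"
    | (middle) "n + m \<le> r" "r \<le> 3 * n - m"
    | (upper) "3 * n - m < r" "r < 3 * n"
  using assms by linarith

lemma tq_coeffs_lower:
  "n \<le> r \<Longrightarrow> r < n + m \<Longrightarrow> tq_coeffs n m r = pair_coeff (mu n m r) (2 * n - r) (mu n m (2 * n - r)) r"
  by (simp add: tq_coeffs_def)

lemma tq_coeffs_middle: "n + m \<le> r \<Longrightarrow> r \<le> 3 * n - m \<Longrightarrow> tq_coeffs n m r = unit_coeff r"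
  by (simp add: tq_coeffs_def)

lemma tq_coeffs_upper:
  assumes "m < n" "3 * n - m < r"
  shows "tq_coeffs n m r = pair_coeff (mu (3 * n) m r) r (- mu (3 * n) m (6 * n - r)) (6 * n - r)"
proof -
  have h: "\<not> (n \<le> r \<and> r < n + m)" "\<not> (n + m \<le> r \<and> r \<le> 3 * n - m)" "\<not> r \<le> 3 * n - m"
    using assms by arith+
  show ?thesis
    unfolding tq_coeffs_def qf_coeffs_def if_not_P[OF h(1)] if_not_P[OF h(2)] if_not_P[OF h(3)]
    by simp
qed

lemma tq_eq_cheb_series:
  "n \<le> r \<Longrightarrow> r < 3 * n \<Longrightarrow> 6 * n \<le> L \<Longrightarrow> tq n m r = cheb_series L (tq_coeffs n m r)"
  by (auto simp: fun_eq_iff tq_def tq_coeffs_def qf_coeffs_def cheb_series_unit_coeff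
      cheb_series_pair_coeff)

lemma vv_pos: "0 < m \<Longrightarrow> 0 < vv n m r"
  unfolding vv_def by (auto intro!: divide_pos_pos add_pos_nonneg)

lemma sq_add_sq_halves:
  fixes x d :: real
  assumes "x \<noteq> 0"
  shows "((x + d) / (2 * x))\<^sup>2 + ((x - d) / (2 * x))\<^sup>2 = (x\<^sup>2 + d\<^sup>2) / (2 * x\<^sup>2)"
  using assms by (simp add: field_simps power2_eq_square)

lemma coeff_inner_tq_coeffs_self:
  assumes m: "0 < m" "m < n" and L: "6 * n \<le> L" and r: "n \<le> r" "r < 3 * n"
  shows "coeff_inner L (tq_coeffs n m r) (tq_coeffs n m r) = vv n m r"
  using m(2) r
proof (cases rule: wavelet_index_cases)
  case lower
  show ?thesis
  proof (cases "r = n")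
    case True
    with m L show ?thesis
      by (simp add: tq_coeffs_lower coeff_inner_simps mu_def vv_def)
  next
    case False
    then have "r \<noteq> 2 * n - r" "n < r"
      using lower by arith+
    with lower m L have "coeff_inner L (tq_coeffs n m r) (tq_coeffs n m r)
        = (mu n m r)\<^sup>2 + (mu n m (2 * n - r))\<^sup>2"
      by (simp add: tq_coeffs_lower coeff_inner_simps power2_eq_square)
    also have "\<dots> = vv n m r"
    proof -
      have e: "mu n m r = (real m + (real n - real r)) / (2 * real m)"
        "mu n m (2 * n - r) = (real m - (real n - real r)) / (2 * real m)"
        using lower m by (simp_all add: mu_transition mu_transition_reflect)
      have "real m \<noteq> 0" using m by simp
      show ?thesis
        unfolding e sq_add_sq_halves[OF \<open>real m \<noteq> 0\<close>]
        using lower \<open>n < r\<close> by (simp add: vv_def)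
    qed
    finally show ?thesis .
  qed
next
  case middle
  with m L show ?thesis
    by (simp add: tq_coeffs_middle coeff_inner_simps vv_def)
next
  case upper
  then have ne: "r \<noteq> 6 * n - r" "\<not> (n < r \<and> r < n + m)"
    "\<not> (r = n \<or> n + m \<le> r \<and> r \<le> 3 * n - m)"
    using m by arith+
  with upper m L have "coeff_inner L (tq_coeffs n m r) (tq_coeffs n m r)
      = (mu (3 * n) m r)\<^sup>2 + (mu (3 * n) m (6 * n - r))\<^sup>2"
    by (simp add: tq_coeffs_upper coeff_inner_simps power2_eq_square)
  also have "\<dots> = vv n m r"
  proof -
    have e: "mu (3 * n) m r = (real m + (3 * real n - real r)) / (2 * real m)"
      "mu (3 * n) m (6 * n - r) = (real m - (3 * real n - real r)) / (2 * real m)"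
      using upper m mu_transition_reflect[of m "3 * n" r] by (simp_all add: mu_transition)
    have "real m \<noteq> 0" using m by simp
    show ?thesis
      unfolding e sq_add_sq_halves[OF \<open>real m \<noteq> 0\<close>] vv_def
        if_not_P[OF ne(2)] if_not_P[OF ne(3)]
      by simp
  qed
  finally show ?thesis .
qed

lemma coeff_inner_tq_coeffs_orthogonal:
  assumes m: "m < n" and L: "6 * n \<le> L"
    and r: "n \<le> r" "r < 3 * n" and s: "n \<le> s" "s < 3 * n" and "r \<noteq> s"
  shows "coeff_inner L (tq_coeffs n m r) (tq_coeffs n m s) = 0"
  by (cases rule: wavelet_index_cases[OF m r]; cases rule: wavelet_index_cases[OF m s])
    (use assms in \<open>auto simp: tq_coeffs_lower tq_coeffs_middle tq_coeffs_upper coeff_inner_simps\<close>)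

lemma coeff_inner_tq_qf_coeffs:
  assumes m: "m < n" and L: "6 * n \<le> L" and r: "n \<le> r" "r < 3 * n" and j: "j < n"
  shows "coeff_inner L (tq_coeffs n m r) (qf_coeffs n m j) = 0"
  by (cases rule: wavelet_index_cases[OF m r])
    (use assms in \<open>auto simp: tq_coeffs_lower tq_coeffs_middle tq_coeffs_upper qf_coeffs_def
      coeff_inner_simps\<close>)

section \<open>The spaces V in coefficients\<close>

text \<open>Characterises the coefficient vectors of the elements of V_N^m.\<close>
definition V_coeffs :: "nat \<Rightarrow> nat \<Rightarrow> (nat \<Rightarrow> real) \<Rightarrow> bool" where
  "V_coeffs N m b \<longleftrightarrow> (\<forall>j\<ge>N + m. b j = 0) \<and> b N = 0 \<and>
     (\<forall>r. N - m < r \<and> r < N \<longrightarrow> mu N m (2 * N - r) * b r + mu N m r * b (2 * N - r) = 0)"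

lemma V_coeffs_lincomb:
  assumes "\<And>i. i \<in> I \<Longrightarrow> V_coeffs N m (v i)"
  shows "V_coeffs N m (\<lambda>j. \<Sum>i\<in>I. c i * v i j)"
proof -
  have "mu N m (2 * N - r) * (\<Sum>i\<in>I. c i * v i r) + mu N m r * (\<Sum>i\<in>I. c i * v i (2 * N - r))
      = (\<Sum>i\<in>I. c i * (mu N m (2 * N - r) * v i r + mu N m r * v i (2 * N - r)))" for r
    by (simp add: distrib_left sum.distrib sum_distrib_left mult.left_commute)
  with assms show ?thesis
    unfolding V_coeffs_def by (auto intro!: sum.neutral)
qed

lemma V_coeffs_diff:
  assumes "V_coeffs N m a" "V_coeffs N m b"
  shows "V_coeffs N m (\<lambda>j. a j - b j)"
proof -
  have "mu N m (2 * N - r) * (a r - b r) + mu N m r * (a (2 * N - r) - b (2 * N - r))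
      = (mu N m (2 * N - r) * a r + mu N m r * a (2 * N - r))
        - (mu N m (2 * N - r) * b r + mu N m r * b (2 * N - r))" for r
    by (simp add: algebra_simps)
  with assms show ?thesis
    unfolding V_coeffs_def by simp
qed

lemma V_coeffs_if_vanishing_above:
  assumes "0 < m" "m \<le> N" "\<And>j. N - m < j \<Longrightarrow> b j = 0"
  shows "V_coeffs N m b"
proof -
  have "N - m < 2 * N - r" if "N - m < r" "r < N" for r
    using that by arith
  with assms show ?thesis
    unfolding V_coeffs_def by auto
qed

lemma V_coeffs_qf_coeffs:
  assumes m: "0 < m" "m \<le> N" and r: "r < N"
  shows "V_coeffs N m (qf_coeffs N m r)"
proof (cases "r \<le> N - m")
  case True
  then show ?thesis
    using m by (intro V_coeffs_if_vanishing_above) (auto simp: qf_coeffs_def unit_coeff_def)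
next
  case False
  define r' where "r' = 2 * N - r"
  have r': "N < r'" "r' < N + m" "2 * N - r' = r"
    using False r unfolding r'_def by arith+
  have b: "qf_coeffs N m r = pair_coeff (mu N m r) r (- mu N m r') r'"
    using False by (simp add: qf_coeffs_def r'_def)
  have "mu N m (2 * N - s) * qf_coeffs N m r s + mu N m s * qf_coeffs N m r (2 * N - s) = 0"
    if "N - m < s" "s < N" for s
  proof (cases "s = r")
    case True
    then show ?thesis
      using r' r by (simp add: b pair_coeff_def unit_coeff_def r'_def)
  next
    case False
    have "s \<noteq> r'" "2 * N - s \<noteq> r" "2 * N - s \<noteq> r'"
      using False that r r' by arith+
    with False show ?thesis
      by (simp add: b pair_coeff_def unit_coeff_def)
  qed
  moreover have "qf_coeffs N m r j = 0" if "N + m \<le> j \<or> j = N" for j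
    using that r r' by (auto simp: b pair_coeff_def unit_coeff_def)
  ultimately show ?thesis
    unfolding V_coeffs_def by auto
qed

lemma V_coeffs_tq_coeffs:
  assumes m: "0 < m" "m < n" and r: "n \<le> r" "r < 3 * n"
  shows "V_coeffs (3 * n) m (tq_coeffs n m r)"
  using m(2) r
proof (cases rule: wavelet_index_cases)
  case lower
  then show ?thesis
    using m by (intro V_coeffs_if_vanishing_above)
      (auto simp: tq_coeffs_lower pair_coeff_def unit_coeff_def)
next
  case middle
  then show ?thesis
    using m by (intro V_coeffs_if_vanishing_above) (auto simp: tq_coeffs_middle unit_coeff_def)
next
  case upper
  then have "tq_coeffs n m r = qf_coeffs (3 * n) m r"
    using m by (simp add: tq_coeffs_upper qf_coeffs_def)
  with m r show ?thesis
    by (simp add: V_coeffs_qf_coeffs)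
qed

lemma V_coeffs_imp_lincomb_qf_coeffs:
  assumes m: "0 < m" "m \<le> N" and b: "V_coeffs N m b"
  shows "\<exists>c. \<forall>j. b j = (\<Sum>i<N. c i * qf_coeffs N m i j)"
proof -
  define c where "c i = (if i \<le> N - m then b i else b i / mu N m i)" for i
  have only_term: "(\<Sum>i<N. c i * qf_coeffs N m i j) = c i0 * qf_coeffs N m i0 j"
    if "i0 < N" "\<And>i. i < N \<Longrightarrow> i \<noteq> i0 \<Longrightarrow> qf_coeffs N m i j = 0" for i0 j
    using that by (subst sum.remove[of _ i0]) (auto intro!: sum.neutral)
  have no_term: "(\<Sum>i<N. c i * qf_coeffs N m i j) = 0"
    if "\<And>i. i < N \<Longrightarrow> qf_coeffs N m i j = 0" for j
    using that by (auto intro!: sum.neutral)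
  have "b j = (\<Sum>i<N. c i * qf_coeffs N m i j)" for j
  proof -
    consider (below) "j < N" | (at) "j = N" | (above) "N < j" "j < N + m" | (beyond) "N + m \<le> j"
      by linarith
    then show ?thesis
    proof cases
      case below
      then show ?thesis
        using mu_transition_pos[OF m(1), of N j]
        by (subst only_term[of j]) (auto simp: qf_coeffs_def pair_coeff_def unit_coeff_def c_def)
    next
      case at
      with b show ?thesis
        by (subst no_term) (auto simp: V_coeffs_def qf_coeffs_def pair_coeff_def unit_coeff_def)
    next
      case above
      define i0 where "i0 = 2 * N - j"
      have i0: "N - m < i0" "i0 < N" "2 * N - i0 = j"
        using above m unfolding i0_def by arith+
      have "mu N m j * b i0 + mu N m i0 * b j = 0"
        using b i0 unfolding V_coeffs_def by auto
      then have "b j = - b i0 / mu N m i0 * mu N m j"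
        using mu_transition_pos[OF m(1) i0(1)] i0 by (simp add: field_simps)
      with above i0 show ?thesis
        by (subst only_term[of i0]) (auto simp: qf_coeffs_def pair_coeff_def unit_coeff_def c_def)
    next
      case beyond
      with b show ?thesis
        by (subst no_term) (auto simp: V_coeffs_def qf_coeffs_def pair_coeff_def unit_coeff_def)
    qed
  qed
  then show ?thesis by blast
qed

lemma V_space_eq_cheb_series:
  assumes "f \<in> V_space N m" "2 * N \<le> L"
  obtains c where "f = cheb_series L (\<lambda>j. \<Sum>i<N. c i * qf_coeffs N m i j)"
proof -
  obtain c where c: "f = (\<lambda>x. \<Sum>i<N. c i * qf N m i x)"
    using assms(1) unfolding V_space_def lin_span_def by blast
  have "f = (\<lambda>x. \<Sum>i<N. c i * cheb_series L (qf_coeffs N m i) x)"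
    unfolding c using assms(2) by (intro ext sum.cong refl) (simp add: qf_eq_cheb_series)
  also have "\<dots> = cheb_series L (\<lambda>j. \<Sum>i<N. c i * qf_coeffs N m i j)"
    by (simp add: fun_eq_iff cheb_series_lincomb)
  finally show ?thesis using that by blast
qed

lemma cheb_series_in_V_space:
  assumes "0 < m" "m \<le> N" "V_coeffs N m b" "2 * N \<le> L"
  shows "cheb_series L b \<in> V_space N m"
proof -
  obtain c where "\<And>j. b j = (\<Sum>i<N. c i * qf_coeffs N m i j)"
    using V_coeffs_imp_lincomb_qf_coeffs[OF assms(1-3)] by blast
  then have b: "b = (\<lambda>j. \<Sum>i<N. c i * qf_coeffs N m i j)"
    by (simp add: fun_eq_iff)
  have "cheb_series L b = (\<lambda>x. \<Sum>i<N. c i * cheb_series L (qf_coeffs N m i) x)"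
    unfolding b by (simp add: fun_eq_iff cheb_series_lincomb)
  also have "\<dots> = (\<lambda>x. \<Sum>i<N. c i * qf N m i x)"
    using assms(4) by (simp add: qf_eq_cheb_series)
  finally show ?thesis
    unfolding V_space_def lin_span_def by blast
qed

lemma qf_in_V_space: "j < N \<Longrightarrow> qf N m j \<in> V_space N m"
  using sum_unit_coeff_mult[of j N "\<lambda>i. qf N m i _"]
  unfolding V_space_def lin_span_def by (auto simp: fun_eq_iff intro!: exI[of _ "unit_coeff j"])

lemma rotation_system_eq_0:
  fixes p q x z :: real
  assumes "p \<noteq> 0" "p * x - q * z = 0" "q * x + p * z = 0"
  shows "x = 0 \<and> z = 0"
proof -
  have "(p\<^sup>2 + q\<^sup>2) * x = p * (p * x - q * z) + q * (q * x + p * z)"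
    by (simp add: algebra_simps power2_eq_square)
  moreover have "p\<^sup>2 + q\<^sup>2 > 0"
    using assms(1) by (simp add: add_pos_nonneg)
  ultimately show ?thesis
    using assms by auto
qed

text \<open>On each index pair {j, 2n - j} near n and {j, 6n - j} near 3n, two of the conditions form
  a nonsingular rotation system; the remaining indices are isolated.\<close>
lemma orthogonal_qf_tq_coeffs_imp_zero:
  assumes m: "0 < m" "m < n" and V: "V_coeffs (3 * n) m b"
    and qf: "\<And>j. j < n \<Longrightarrow> coeff_inner (6 * n) b (qf_coeffs n m j) = 0"
    and tq: "\<And>r. n \<le> r \<Longrightarrow> r < 3 * n \<Longrightarrow> coeff_inner (6 * n) b (tq_coeffs n m r) = 0"
  shows "b j = 0"
proof -
  have lower_pair: "b j = 0 \<and> b (2 * n - j) = 0" if j: "n - m < j" "j < n" for j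
  proof -
    define r where "r = 2 * n - j"
    have r: "n \<le> r" "r < n + m" "2 * n - r = j" "\<not> j \<le> n - m"
      using j m unfolding r_def by arith+
    have "mu n m j * b j - mu n m r * b r = 0"
      using qf[OF j(2)] r j m by (simp add: qf_coeffs_def coeff_inner_simps r_def)
    moreover have "mu n m r * b j + mu n m j * b r = 0"
      using tq[OF r(1)] r m by (simp add: tq_coeffs_lower coeff_inner_simps)
    moreover have "mu n m j \<noteq> 0"
      using mu_transition_pos[OF m(1)] j m by fastforce
    ultimately show ?thesis
      using rotation_system_eq_0 unfolding r_def by blast
  qed
  have upper_pair: "b j = 0 \<and> b (6 * n - j) = 0" if j: "3 * n - m < j" "j < 3 * n" for j
  proof -
    have "mu (3 * n) m j * b j - mu (3 * n) m (6 * n - j) * b (6 * n - j) = 0"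
      using tq[of j] j m by (simp add: tq_coeffs_upper coeff_inner_simps)
    moreover have "mu (3 * n) m (6 * n - j) * b j + mu (3 * n) m j * b (6 * n - j) = 0"
      using V j unfolding V_coeffs_def by auto
    moreover have "mu (3 * n) m j \<noteq> 0"
      using mu_transition_pos[OF m(1) j(1)] j by simp
    ultimately show ?thesis
      using rotation_system_eq_0 by blast
  qed
  consider "j \<le> n - m" | "n - m < j" "j < n" | "j = n" | "n < j" "j < n + m"
    | "n + m \<le> j" "j \<le> 3 * n - m" | "3 * n - m < j" "j < 3 * n" | "j = 3 * n"
    | "3 * n < j" "j < 3 * n + m" | "3 * n + m \<le> j"
    using m by linarith
  then show ?thesis
  proof cases
    case 1
    with qf[of j] m show ?thesis
      by (simp add: qf_coeffs_def coeff_inner_simps)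
  next
    case 3
    have "mu n m n = 1 / 2"
      using m by (simp add: mu_transition)
    with 3 tq[of n] m show ?thesis
      by (simp add: tq_coeffs_lower coeff_inner_simps)
  next
    case 4
    with lower_pair[of "2 * n - j"] m show ?thesis
      by (simp add: less_diff_conv2)
  next
    case 5
    with tq[of j] m show ?thesis
      by (simp add: tq_coeffs_middle coeff_inner_simps)
  next
    case 8
    with upper_pair[of "6 * n - j"] m show ?thesis
      by (simp add: less_diff_conv2)
  qed (use lower_pair upper_pair V in \<open>auto simp: V_coeffs_def\<close>)
qed

section \<open>Discrete orthogonality on the Chebyshev nodes\<close>

text \<open>The node x_{i+1}^N is cos (cheb_angle N i): nodes are indexed from 0 here.\<close>
definition cheb_angle :: "nat \<Rightarrow> nat \<Rightarrow> real" where
  "cheb_angle N i = (2 * real i + 1) * (pi / (2 * real N))"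

lemma sum_cos_cheb_angle:
  assumes j: "j < 2 * N"
  shows "(\<Sum>i<N. cos (real j * cheb_angle N i)) = (if j = 0 then real N else 0)"
proof (cases "j = 0")
  case False
  have N: "0 < N" using j by simp
  define \<alpha> where "\<alpha> = real j * pi / (2 * real N)"
  have "0 < \<alpha>" "\<alpha> < pi"
    using N j False unfolding \<alpha>_def by (auto simp: field_simps)
  then have "sin \<alpha> \<noteq> 0"
    using sin_gt_zero by force
  have telescope: "2 * sin \<alpha> * cos (real j * cheb_angle N i)
      = sin (2 * real (Suc i) * \<alpha>) - sin (2 * real i * \<alpha>)" for i
  proof -
    have "real j * cheb_angle N i = (2 * real i + 1) * \<alpha>"
      unfolding cheb_angle_def \<alpha>_def by (simp add: field_simps)
    moreover have "2 * real (Suc i) * \<alpha> = (2 * real i + 1) * \<alpha> + \<alpha>"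
      "2 * real i * \<alpha> = (2 * real i + 1) * \<alpha> - \<alpha>"
      by (simp_all add: algebra_simps)
    ultimately show ?thesis
      by (simp only: sin_add sin_diff) (simp add: algebra_simps)
  qed
  have "2 * sin \<alpha> * (\<Sum>i<N. cos (real j * cheb_angle N i))
      = (\<Sum>i<N. sin (2 * real (Suc i) * \<alpha>) - sin (2 * real i * \<alpha>))"
    by (simp add: sum_distrib_left telescope)
  also have "\<dots> = sin (real j * pi)"
    using N by (subst sum_lessThan_telescope) (simp add: \<alpha>_def)
  also have "\<dots> = 0"
    by simp
  finally show ?thesis
    using \<open>sin \<alpha> \<noteq> 0\<close> False by simp
qed simp

definition cos_gram :: "nat \<Rightarrow> nat \<Rightarrow> real" where
  "cos_gram a b = (if a = b then 1 else 0) + (if a = 0 \<and> b = 0 then 1 else 0)"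

lemma sum_cos_mult_cos_cheb_angle:
  assumes a: "a < N" and b: "b < N"
  shows "(\<Sum>i<N. cos (real a * cheb_angle N i) * cos (real b * cheb_angle N i))
    = real N / 2 * cos_gram a b"
proof -
  define d where "d = (if a \<le> b then b - a else a - b)"
  have cd: "cos ((real a - real b) * t) = cos (real d * t)" for t
  proof (cases "a \<le> b")
    case True
    then have "(real a - real b) * t = - (real d * t)"
      unfolding d_def by (simp add: of_nat_diff algebra_simps)
    then show ?thesis by simp
  next
    case False
    then show ?thesis unfolding d_def by (simp add: of_nat_diff)
  qed
  have "(\<Sum>i<N. cos (real a * cheb_angle N i) * cos (real b * cheb_angle N i)) =
     (\<Sum>i<N. (cos (real d * cheb_angle N i) + cos (real (a + b) * cheb_angle N i)) / 2)"
    by (intro sum.cong refl)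
      (simp add: cos_times_cos cd left_diff_distrib[symmetric] distrib_right[symmetric])
  also have "\<dots> = ((\<Sum>i<N. cos (real d * cheb_angle N i))
      + (\<Sum>i<N. cos (real (a + b) * cheb_angle N i))) / 2"
    by (simp only: sum_divide_distrib[symmetric] sum.distrib)
  also have "\<dots> = real N / 2 * cos_gram a b"
  proof -
    have "d < 2 * N" "a + b < 2 * N" using a b unfolding d_def by auto
    moreover have "(d = 0) = (a = b)" unfolding d_def by auto
    ultimately show ?thesis
      by (simp add: sum_cos_cheb_angle cos_gram_def del: of_nat_add)
  qed
  finally show ?thesis .
qed

lemma cheb_angle_bounds:
  assumes "i < N"
  shows "0 \<le> cheb_angle N i" and "cheb_angle N i \<le> pi"
proof -
  show "0 \<le> cheb_angle N i"
    unfolding cheb_angle_def by simp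
  have "cheb_angle N i \<le> (2 * real N) * (pi / (2 * real N))"
    unfolding cheb_angle_def using assms by (intro mult_right_mono) auto
  then show "cheb_angle N i \<le> pi"
    using assms by simp
qed

lemma cheb_nodes_eq_image: "cheb_nodes N = (\<lambda>i. cos (cheb_angle N i)) ` {..<N}"
proof -
  have "cheb_nodes N = (\<lambda>k. cos ((2 * real k - 1) * pi / (2 * real N))) ` Suc ` {..<N}"
    unfolding cheb_nodes_def image_Suc_lessThan ..
  also have "\<dots> = (\<lambda>i. cos (cheb_angle N i)) ` {..<N}"
    unfolding image_image cheb_angle_def
    by (intro image_cong refl) (simp add: algebra_simps times_divide_eq_right)
  finally show ?thesis .
qed

lemma inj_on_cos_cheb_angle: "inj_on (\<lambda>i. cos (cheb_angle N i)) {..<N}"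
proof (rule inj_onI)
  fix i j assume "i \<in> {..<N}" "j \<in> {..<N}" and eq: "cos (cheb_angle N i) = cos (cheb_angle N j)"
  then have "i < N" "j < N"
    by auto
  then have "cheb_angle N i = cheb_angle N j"
    using cos_inj_pi[OF cheb_angle_bounds(1,2)[of i N] cheb_angle_bounds(1,2)[of j N] eq] by simp
  with \<open>i < N\<close> show "i = j"
    unfolding cheb_angle_def by simp
qed

lemma sum_cheb_nodes: "(\<Sum>x\<in>cheb_nodes N. f x) = (\<Sum>i<N. f (cos (cheb_angle N i)))"
  unfolding cheb_nodes_eq_image by (simp add: sum.reindex inj_on_cos_cheb_angle)

lemma cheb_nodes_subset_triple: "cheb_nodes n \<subseteq> cheb_nodes (3 * n)"
proof
  fix x assume "x \<in> cheb_nodes n"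
  then obtain i where i: "i < n" "x = cos (cheb_angle n i)"
    unfolding cheb_nodes_eq_image by auto
  then have "cheb_angle n i = cheb_angle (3 * n) (3 * i + 1)" "3 * i + 1 < 3 * n"
    unfolding cheb_angle_def by (simp_all add: field_simps)
  with i show "x \<in> cheb_nodes (3 * n)"
    unfolding cheb_nodes_eq_image by auto
qed

lemma sum_Y_nodes:
  fixes f :: "real \<Rightarrow> real"
  assumes y: "bij_betw y {1..2 * n} (Y_nodes n)"
  shows "(\<Sum>k\<in>{1..2 * n}. f (y k))
    = (\<Sum>i<3 * n. f (cos (cheb_angle (3 * n) i))) - (\<Sum>i<n. f (cos (cheb_angle n i)))"
proof -
  have "(\<Sum>k\<in>{1..2 * n}. f (y k)) = (\<Sum>x\<in>Y_nodes n. f x)"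
    using sum.reindex_bij_betw[OF y] .
  also have "\<dots> = (\<Sum>x\<in>cheb_nodes (3 * n). f x) - (\<Sum>x\<in>cheb_nodes n. f x)"
    unfolding Y_nodes_def using cheb_nodes_subset_triple
    by (intro sum_diff) (auto simp: cheb_nodes_def)
  finally show ?thesis
    by (simp add: sum_cheb_nodes)
qed

text \<open>The coefficient c_{r,k} depends on k only through the node y_k^n.\<close>
definition cc_at :: "nat \<Rightarrow> nat \<Rightarrow> real \<Rightarrow> real" where
  "cc_at n r x = cc n (\<lambda>_. x) r 0"

lemma cc_eq_cc_at: "cc n y r k = cc_at n r (y k)"
  by (simp add: cc_at_def cc_def)

text \<open>At x = cos t, c_r is a combination of cos (r t) and of the cosine of the partner index
  2n - r, the partner of 2n being the constant p_0.\<close>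
definition cc_weight :: "nat \<Rightarrow> nat \<Rightarrow> real" where
  "cc_weight n r = (if r = n then 1 else if r < 2 * n then 1 / sqrt 2
     else if r = 2 * n then 1 / sqrt 3 else sqrt (3 / 2))"

definition cc_partner_weight :: "nat \<Rightarrow> nat \<Rightarrow> real" where
  "cc_partner_weight n r = (if r = n then 0 else if r < 2 * n then 1 / sqrt 2
     else if r = 2 * n then 1 / sqrt 3 else 0)"

definition cc_partner :: "nat \<Rightarrow> nat \<Rightarrow> nat" where
  "cc_partner n r = (if r < 2 * n then 2 * n - r else 0)"

lemma cc_index_cases:
  fixes n r :: nat
  assumes "n \<le> r" "r < 3 * n"
  obtains (first) "r = n" | (below) "n < r" "r < 2 * n" | (middle) "r = 2 * n" "r \<noteq> n"
    | (above) "2 * n < r" "r < 3 * n"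
  using assms by linarith

lemma cc_at_cos:
  assumes r: "n \<le> r" "r < 3 * n" and t: "0 \<le> t" "t \<le> pi"
  shows "cc_at n r (cos t) = sqrt (2 / pi)
    * (cc_weight n r * cos (real r * t) + cc_partner_weight n r * cos (real (cc_partner n r) * t))"
  using r
proof (cases rule: cc_index_cases)
  case first
  with r t show ?thesis
    by (simp add: cc_at_def cc_def cc_weight_def cc_partner_weight_def cheb_p_cos cheb_scale_def)
next
  case below
  with t show ?thesis
    by (simp add: cc_at_def cc_def cc_weight_def cc_partner_weight_def cc_partner_def cheb_p_cos
        cheb_scale_def algebra_simps add_divide_distrib)
next
  case middle
  have "sqrt 2 * sqrt (1 / pi) = sqrt (2 / pi)"
    by (simp add: real_sqrt_mult[symmetric])
  moreover have "cc_at n r (cos t)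
      = (sqrt (2 / pi) * cos (real r * t) + sqrt 2 * sqrt (1 / pi)) / sqrt 3"
    using middle t by (simp add: cc_at_def cc_def cheb_p_cos cheb_scale_def)
  ultimately show ?thesis
    using middle by (simp add: cc_weight_def cc_partner_weight_def cc_partner_def algebra_simps
        add_divide_distrib)
next
  case above
  with t show ?thesis
    by (simp add: cc_at_def cc_def cc_weight_def cc_partner_weight_def cheb_p_cos cheb_scale_def)
qed

definition cc_gram :: "nat \<Rightarrow> nat \<Rightarrow> nat \<Rightarrow> real" where
  "cc_gram n r s =
     cc_weight n r * cc_weight n s * cos_gram r s
     + cc_weight n r * cc_partner_weight n s * cos_gram r (cc_partner n s)
     + cc_partner_weight n r * cc_weight n s * cos_gram (cc_partner n r) s
     + cc_partner_weight n r * cc_partner_weight n s * cos_gram (cc_partner n r) (cc_partner n s)"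

lemma cc_gram_eq:
  assumes r: "n \<le> r" "r < 3 * n" and s: "n \<le> s" "s < 3 * n"
  shows "cc_gram n r s = (if r = s then (if 2 * n < r then 3 / 2 else 1) else 0)"
proof -
  have sqrts: "1 / sqrt 2 * (1 / sqrt 2) = (1 / 2 :: real)"
    "1 / sqrt 3 * (1 / sqrt 3) = (1 / 3 :: real)" "sqrt (3 / 2) * sqrt (3 / 2) = (3 / 2 :: real)"
    by (simp_all add: real_sqrt_mult[symmetric])
  have "0 < n"
    using r by simp
  note simps = sqrts cc_gram_def cos_gram_def cc_weight_def cc_partner_weight_def cc_partner_def
  from r show ?thesis
  proof (cases rule: cc_index_cases)
    case first
    from s show ?thesis by (cases rule: cc_index_cases) (use first \<open>0 < n\<close> in \<open>auto simp: simps\<close>)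
  next
    case below
    from s show ?thesis by (cases rule: cc_index_cases) (use below \<open>0 < n\<close> in \<open>auto simp: simps\<close>)
  next
    case middle
    from s show ?thesis by (cases rule: cc_index_cases) (use middle \<open>0 < n\<close> in \<open>auto simp: simps\<close>)
  next
    case above
    from s show ?thesis by (cases rule: cc_index_cases) (use above \<open>0 < n\<close> in \<open>auto simp: simps\<close>)
  qed
qed

lemma sum_cc_at_X3n:
  assumes r: "n \<le> r" "r < 3 * n" and s: "n \<le> s" "s < 3 * n"
  shows "(\<Sum>i<3 * n. cc_at n r (cos (cheb_angle (3 * n) i)) * cc_at n s (cos (cheb_angle (3 * n) i)))
    = 3 * real n / pi * cc_gram n r s"
proof -
  define C where "C a i = cos (real a * cheb_angle (3 * n) i)" for a i
  have partner: "cc_partner n r < 3 * n" "cc_partner n s < 3 * n"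
    using r unfolding cc_partner_def by auto
  have gram: "(\<Sum>i<3 * n. C a i * C b i) = real (3 * n) / 2 * cos_gram a b"
    if "a < 3 * n" "b < 3 * n" for a b
    unfolding C_def using that by (rule sum_cos_mult_cos_cheb_angle)
  have pointwise: "cc_at n r (cos (cheb_angle (3 * n) i)) * cc_at n s (cos (cheb_angle (3 * n) i))
      = 2 / pi * (cc_weight n r * cc_weight n s * (C r i * C s i)
        + cc_weight n r * cc_partner_weight n s * (C r i * C (cc_partner n s) i)
        + cc_partner_weight n r * cc_weight n s * (C (cc_partner n r) i * C s i)
        + cc_partner_weight n r * cc_partner_weight n s
          * (C (cc_partner n r) i * C (cc_partner n s) i))"
    if "i < 3 * n" for i
  proof -
    have t: "0 \<le> cheb_angle (3 * n) i" "cheb_angle (3 * n) i \<le> pi"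
      using cheb_angle_bounds[OF that] by auto
    have square: "K * a * (K * b) = (K * K) * (a * b)" for K a b :: real
      by (simp only: ac_simps)
    have "sqrt (2 / pi) * sqrt (2 / pi) = 2 / pi"
      by simp
    then show ?thesis
      unfolding cc_at_cos[OF r t] cc_at_cos[OF s t] C_def square
      by (simp add: distrib_left distrib_right ac_simps)
  qed
  have "(\<Sum>i<3 * n. cc_at n r (cos (cheb_angle (3 * n) i)) * cc_at n s (cos (cheb_angle (3 * n) i)))
      = (\<Sum>i<3 * n. 2 / pi * (cc_weight n r * cc_weight n s * (C r i * C s i)
        + cc_weight n r * cc_partner_weight n s * (C r i * C (cc_partner n s) i)
        + cc_partner_weight n r * cc_weight n s * (C (cc_partner n r) i * C s i)
        + cc_partner_weight n r * cc_partner_weight n s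
          * (C (cc_partner n r) i * C (cc_partner n s) i)))"
    by (rule sum.cong) (simp_all add: pointwise)
  also have "\<dots> = 2 / pi * (cc_weight n r * cc_weight n s * (\<Sum>i<3 * n. C r i * C s i)
        + cc_weight n r * cc_partner_weight n s * (\<Sum>i<3 * n. C r i * C (cc_partner n s) i)
        + cc_partner_weight n r * cc_weight n s * (\<Sum>i<3 * n. C (cc_partner n r) i * C s i)
        + cc_partner_weight n r * cc_partner_weight n s
          * (\<Sum>i<3 * n. C (cc_partner n r) i * C (cc_partner n s) i))"
    by (simp only: sum_distrib_left[symmetric] sum.distrib)
  also have "\<dots> = 3 * real n / pi * cc_gram n r s"
    using r s partner unfolding cc_gram_def by (simp only: gram) (simp add: algebra_simps)
  finally show ?thesis .
qed

lemma cheb_angle_multiples: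
  assumes "i < n"
  shows "cos (real n * cheb_angle n i) = 0" and "sin (2 * real n * cheb_angle n i) = 0"
    and "cos (2 * real n * cheb_angle n i) = -1"
proof -
  have n: "real n > 0" using assms by simp
  have "real n * cheb_angle n i = real i * pi + pi / 2"
    unfolding cheb_angle_def using n by (simp add: field_simps)
  then show "cos (real n * cheb_angle n i) = 0"
    by (simp add: cos_add)
  have "2 * real n * cheb_angle n i = real (2 * i + 1) * pi"
    unfolding cheb_angle_def using n by (simp add: field_simps)
  then show "sin (2 * real n * cheb_angle n i) = 0" "cos (2 * real n * cheb_angle n i) = -1"
    by (simp_all only: sin_npi cos_npi) simp
qed

lemma cc_at_Xn:
  assumes r: "n \<le> r" "r < 3 * n" and i: "i < n"
  shows "cc_at n r (cos (cheb_angle n i)) = (if 2 * n < r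
    then - (sqrt (2 / pi) * sqrt (3 / 2)) * cos (real (r - 2 * n) * cheb_angle n i) else 0)"
proof -
  define t where "t = cheb_angle n i"
  have "0 \<le> t" "t \<le> pi"
    using cheb_angle_bounds[OF i] unfolding t_def by auto
  note cc = cc_at_cos[OF r this]
  note multiples = cheb_angle_multiples[OF i, folded t_def]
  from r show ?thesis
  proof (cases rule: cc_index_cases)
    case below
    have "real r * t = real n * t + (real r - real n) * t"
      "real (2 * n - r) * t = real n * t - (real r - real n) * t"
      using below by (auto simp: algebra_simps)
    then have "cos (real r * t) + cos (real (2 * n - r) * t) = 0"
      using multiples by (simp add: cos_add cos_diff)
    with cc below show ?thesis
      by (simp add: cc_weight_def cc_partner_weight_def cc_partner_def t_def
          add_divide_distrib[symmetric])
  next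
    case above
    have "real r * t = 2 * real n * t + real (r - 2 * n) * t"
      using above by (simp add: algebra_simps)
    then have "cos (real r * t) = - cos (real (r - 2 * n) * t)"
      using multiples by (simp add: cos_add)
    with cc above show ?thesis
      by (simp add: cc_weight_def cc_partner_weight_def cc_partner_def t_def)
  qed (use cc multiples in \<open>simp_all add: t_def cc_weight_def cc_partner_weight_def cc_partner_def\<close>)
qed

lemma sum_cc_at_Xn:
  assumes r: "n \<le> r" "r < 3 * n" and s: "n \<le> s" "s < 3 * n"
  shows "(\<Sum>i<n. cc_at n r (cos (cheb_angle n i)) * cc_at n s (cos (cheb_angle n i)))
    = (if r = s \<and> 2 * n < r then 3 * real n / (2 * pi) else 0)"
proof (cases "2 * n < r \<and> 2 * n < s")
  case True
  define K where "K = sqrt (2 / pi) * sqrt (3 / 2)"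
  have "K * K = 3 / pi"
    unfolding K_def by (simp add: real_sqrt_mult[symmetric])
  moreover have "cc_at n r (cos (cheb_angle n i)) * cc_at n s (cos (cheb_angle n i))
      = K * K * (cos (real (r - 2 * n) * cheb_angle n i) * cos (real (s - 2 * n) * cheb_angle n i))"
    if "i < n" for i
    using True
    by (simp add: cc_at_Xn[OF r that, folded K_def] cc_at_Xn[OF s that, folded K_def] ac_simps)
  ultimately have "cc_at n r (cos (cheb_angle n i)) * cc_at n s (cos (cheb_angle n i))
      = 3 / pi
        * (cos (real (r - 2 * n) * cheb_angle n i) * cos (real (s - 2 * n) * cheb_angle n i))"
    if "i < n" for i
    using that by simp
  then have "(\<Sum>i<n. cc_at n r (cos (cheb_angle n i)) * cc_at n s (cos (cheb_angle n i)))
      = 3 / pi * (\<Sum>i<n.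
          cos (real (r - 2 * n) * cheb_angle n i) * cos (real (s - 2 * n) * cheb_angle n i))"
    by (simp add: sum_distrib_left)
  also have "\<dots> = 3 / pi * (real n / 2 * cos_gram (r - 2 * n) (s - 2 * n))"
    using True r s by (subst sum_cos_mult_cos_cheb_angle) auto
  finally show ?thesis
    using True by (auto simp: cos_gram_def)
next
  case False
  with r s show ?thesis
    by (auto simp: cc_at_Xn intro!: sum.neutral)
qed

text \<open>On X_{3n} the columns of sigma have the Gram matrix diag(1, ..., 1, 3/2, ..., 3/2);
  removing X_n subtracts exactly the excess 1/2 of the last n - 1 columns.\<close>
lemma sigma_orthonormal_columns:
  assumes y: "bij_betw y {1..2 * n} (Y_nodes n)"
    and r: "n \<le> r" "r < 3 * n" and s: "n \<le> s" "s < 3 * n"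
  shows "(\<Sum>k\<in>{1..2 * n}. sigma n y r k * sigma n y s k) = (if r = s then 1 else 0)"
proof -
  have n: "0 < n" using r by simp
  have "sqrt (pi / (3 * real n)) * sqrt (pi / (3 * real n)) = pi / (3 * real n)"
    by simp
  then have "(\<Sum>k\<in>{1..2 * n}. sigma n y r k * sigma n y s k)
      = pi / (3 * real n) * (\<Sum>k\<in>{1..2 * n}. cc_at n r (y k) * cc_at n s (y k))"
    by (simp add: sigma_def cc_eq_cc_at sum_distrib_left algebra_simps)
  also have "\<dots> = pi / (3 * real n) * (3 * real n / pi * cc_gram n r s
      - (if r = s \<and> 2 * n < r then 3 * real n / (2 * pi) else 0))"
    using sum_Y_nodes[OF y, of "\<lambda>x. cc_at n r x * cc_at n s x"] r s
    by (simp add: sum_cc_at_X3n sum_cc_at_Xn)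
  also have "\<dots> = (if r = s then 1 else 0)"
    using n cc_gram_eq[OF r s] by (auto simp: field_simps)
  finally show ?thesis .
qed

lemma orthonormal_columns_imp_orthonormal_rows:
  fixes M :: "nat \<Rightarrow> nat \<Rightarrow> real"
  assumes columns: "\<And>i j. i < N \<Longrightarrow> j < N \<Longrightarrow> (\<Sum>l<N. M l i * M l j) = (if i = j then 1 else 0)"
    and "i < N" "j < N"
  shows "(\<Sum>l<N. M i l * M j l) = (if i = j then 1 else 0)"
proof -
  define A where "A = mat N N (\<lambda>(i, j). M i j)"
  have A: "A \<in> carrier_mat N N" and AT: "transpose_mat A \<in> carrier_mat N N"
    unfolding A_def by auto
  have "transpose_mat A * A = 1\<^sub>m N"
  proof (rule eq_matI)
    fix i j assume "i < dim_row (1\<^sub>m N :: real mat)" "j < dim_col (1\<^sub>m N :: real mat)"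
    with columns[of i j] show "(transpose_mat A * A) $$ (i, j) = 1\<^sub>m N $$ (i, j)"
      unfolding A_def by (simp add: scalar_prod_def lessThan_atLeast0 mult.commute)
  qed (use A in auto)
  then have "A * transpose_mat A = 1\<^sub>m N"
    by (rule mat_mult_left_right_inverse[OF AT A])
  then have "(A * transpose_mat A) $$ (i, j) = 1\<^sub>m N $$ (i, j)"
    by simp
  with \<open>i < N\<close> \<open>j < N\<close> show ?thesis
    unfolding A_def by (simp add: scalar_prod_def lessThan_atLeast0)
qed

lemma sigma_orthonormal_rows:
  assumes y: "bij_betw y {1..2 * n} (Y_nodes n)"
    and k: "k \<in> {1..2 * n}" and h: "h \<in> {1..2 * n}"
  shows "(\<Sum>r\<in>{n..<3 * n}. sigma n y r k * sigma n y r h) = (if k = h then 1 else 0)"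
proof -
  define M where "M l i = sigma n y (n + i) (Suc l)" for l i
  have shift_k: "(\<Sum>k\<in>{1..2 * n}. f k) = (\<Sum>l<2 * n. f (Suc l))" for f :: "nat \<Rightarrow> real"
    using sum.atLeast1_atMost_eq[of f "2 * n"] by simp
  have shift_r: "(\<Sum>r\<in>{n..<3 * n}. f r) = (\<Sum>l<2 * n. f (n + l))" for f :: "nat \<Rightarrow> real"
    using sum.atLeastLessThan_shift_0[of f n "3 * n"] by (simp add: lessThan_atLeast0 comp_def)
  have "(\<Sum>l<2 * n. M l i * M l j) = (if i = j then 1 else 0)" if "i < 2 * n" "j < 2 * n" for i j
    using sigma_orthonormal_columns[OF y, of "n + i" "n + j"] that unfolding M_def shift_k by auto
  from orthonormal_columns_imp_orthonormal_rows[OF this, of "k - 1" "h - 1"] k h show ?thesis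
    unfolding M_def shift_r by auto
qed

section \<open>The wavelets\<close>

definition psi_coeffs :: "nat \<Rightarrow> nat \<Rightarrow> (nat \<Rightarrow> real) \<Rightarrow> nat \<Rightarrow> nat \<Rightarrow> real" where
  "psi_coeffs n m y k = (\<lambda>j. \<Sum>r\<in>{n..<3 * n}. sigma n y r k / sqrt (vv n m r) * tq_coeffs n m r j)"

lemma psi_eq_cheb_series: "psi n m y k = cheb_series (6 * n) (psi_coeffs n m y k)"
proof
  fix x
  have "psi n m y k x = (\<Sum>r\<in>{n..<3 * n}. sigma n y r k / sqrt (vv n m r) * tq n m r x)"
    unfolding psi_def by simp
  also have "\<dots> = (\<Sum>r\<in>{n..<3 * n}.
      sigma n y r k / sqrt (vv n m r) * cheb_series (6 * n) (tq_coeffs n m r) x)"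
    by (intro sum.cong refl) (simp add: tq_eq_cheb_series[of _ _ "6 * n"])
  also have "\<dots> = cheb_series (6 * n) (psi_coeffs n m y k) x"
    unfolding psi_coeffs_def cheb_series_lincomb ..
  finally show "psi n m y k x = cheb_series (6 * n) (psi_coeffs n m y k) x" .
qed

lemma V_coeffs_psi_coeffs: "0 < m \<Longrightarrow> m < n \<Longrightarrow> V_coeffs (3 * n) m (psi_coeffs n m y k)"
  unfolding psi_coeffs_def by (intro V_coeffs_lincomb V_coeffs_tq_coeffs) auto

lemma coeff_inner_psi_qf_coeffs:
  "m < n \<Longrightarrow> j < n \<Longrightarrow> coeff_inner (6 * n) (psi_coeffs n m y k) (qf_coeffs n m j) = 0"
  unfolding psi_coeffs_def coeff_inner_lincomb_left
  by (intro sum.neutral) (auto simp: coeff_inner_tq_qf_coeffs)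

lemma coeff_inner_psi_tq_coeffs:
  assumes m: "0 < m" "m < n" and r: "n \<le> r" "r < 3 * n"
  shows "coeff_inner (6 * n) (psi_coeffs n m y k) (tq_coeffs n m r)
    = sigma n y r k * sqrt (vv n m r)"
proof -
  have "coeff_inner (6 * n) (psi_coeffs n m y k) (tq_coeffs n m r)
      = (\<Sum>s\<in>{n..<3 * n}. if s = r then sigma n y s k / sqrt (vv n m s) * vv n m s else 0)"
    unfolding psi_coeffs_def coeff_inner_lincomb_left
    using assms
    by (intro sum.cong refl) (auto simp: coeff_inner_tq_coeffs_self coeff_inner_tq_coeffs_orthogonal)
  also have "\<dots> = sigma n y r k / sqrt (vv n m r) * vv n m r"
    using r by simp
  also have "\<dots> = sigma n y r k * (vv n m r / sqrt (vv n m r))"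
    by simp
  also have "vv n m r / sqrt (vv n m r) = sqrt (vv n m r)"
    using vv_pos[OF m(1), of n r] by (simp add: real_div_sqrt)
  finally show ?thesis .
qed

lemma coeff_inner_psi_psi_coeffs:
  assumes "0 < m" "m < n"
  shows "coeff_inner (6 * n) (psi_coeffs n m y k) (psi_coeffs n m y h)
    = (\<Sum>r\<in>{n..<3 * n}. sigma n y r k * sigma n y r h)"
proof -
  have "vv n m r \<noteq> 0" for r
    using vv_pos[OF assms(1), of n r] by simp
  with assms show ?thesis
    unfolding psi_coeffs_def[of n m y h] coeff_inner_lincomb_right
    by (intro sum.cong refl) (simp add: coeff_inner_psi_tq_coeffs)
qed

lemma psi_orthonormal:
  assumes "0 < m" "m < n" "bij_betw y {1..2 * n} (Y_nodes n)" "k \<in> {1..2 * n}" "h \<in> {1..2 * n}"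
  shows "cheb_inner (psi n m y k) (psi n m y h) = (if k = h then 1 else 0)"
  using assms by (simp add: psi_eq_cheb_series cheb_inner_cheb_series coeff_inner_psi_psi_coeffs
      sigma_orthonormal_rows)

lemma span_psi_subset_W_space:
  assumes m: "0 < m" "m < n"
  shows "lin_span {1..2 * n} (psi n m y) \<subseteq> W_space n m"
proof
  fix f assume "f \<in> lin_span {1..2 * n} (psi n m y)"
  then obtain d where "f = (\<lambda>x. \<Sum>k\<in>{1..2 * n}. d k * psi n m y k x)"
    unfolding lin_span_def by blast
  then have f: "f = cheb_series (6 * n) (\<lambda>j. \<Sum>k\<in>{1..2 * n}. d k * psi_coeffs n m y k j)"
    by (simp add: fun_eq_iff psi_eq_cheb_series cheb_series_lincomb)
  have "f \<in> V_space (3 * n) m"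
    unfolding f using m
    by (intro cheb_series_in_V_space V_coeffs_lincomb V_coeffs_psi_coeffs) auto
  moreover have "cheb_inner f g = 0" if "g \<in> V_space n m" for g
  proof -
    obtain c where g: "g = cheb_series (6 * n) (\<lambda>j. \<Sum>i<n. c i * qf_coeffs n m i j)"
      using V_space_eq_cheb_series[OF \<open>g \<in> V_space n m\<close>, of "6 * n"] by auto
    show ?thesis
      unfolding f g cheb_inner_cheb_series coeff_inner_lincomb_left coeff_inner_lincomb_right
      using m by (simp add: coeff_inner_psi_qf_coeffs)
  qed
  ultimately show "f \<in> W_space n m"
    unfolding W_space_def by blast
qed

text \<open>Projecting onto the span of the psi leaves the tq-components unchanged: this is where the
  orthonormality of the columns of sigma enters.\<close>
lemma coeff_inner_psi_expansion_tq_coeffs: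
  assumes m: "0 < m" "m < n" and y: "bij_betw y {1..2 * n} (Y_nodes n)"
    and r: "n \<le> r" "r < 3 * n"
  shows "coeff_inner (6 * n)
      (\<lambda>j. \<Sum>k\<in>{1..2 * n}. coeff_inner (6 * n) a (psi_coeffs n m y k) * psi_coeffs n m y k j)
      (tq_coeffs n m r)
    = coeff_inner (6 * n) a (tq_coeffs n m r)"
proof -
  define w where "w s = coeff_inner (6 * n) a (tq_coeffs n m s) / sqrt (vv n m s)" for s
  have d: "coeff_inner (6 * n) a (psi_coeffs n m y k) = (\<Sum>s\<in>{n..<3 * n}. w s * sigma n y s k)" for k
    unfolding psi_coeffs_def coeff_inner_lincomb_right w_def by (simp add: mult_ac)
  have "coeff_inner (6 * n)
      (\<lambda>j. \<Sum>k\<in>{1..2 * n}. coeff_inner (6 * n) a (psi_coeffs n m y k) * psi_coeffs n m y k j)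
      (tq_coeffs n m r)
    = (\<Sum>k\<in>{1..2 * n}. (\<Sum>s\<in>{n..<3 * n}. w s * sigma n y s k) * (sigma n y r k * sqrt (vv n m r)))"
    unfolding coeff_inner_lincomb_left d coeff_inner_psi_tq_coeffs[OF m r] ..
  also have "\<dots> = (\<Sum>k\<in>{1..2 * n}. \<Sum>s\<in>{n..<3 * n}.
      w s * sqrt (vv n m r) * (sigma n y s k * sigma n y r k))"
    by (simp add: sum_distrib_left sum_distrib_right mult_ac)
  also have "\<dots> = (\<Sum>s\<in>{n..<3 * n}.
      w s * sqrt (vv n m r) * (\<Sum>k\<in>{1..2 * n}. sigma n y s k * sigma n y r k))"
    unfolding sum_distrib_left by (rule sum.swap)
  also have "\<dots> = (\<Sum>s\<in>{n..<3 * n}. if s = r then w s * sqrt (vv n m r) else 0)"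
  proof (intro sum.cong refl)
    fix s assume "s \<in> {n..<3 * n}"
    then show "w s * sqrt (vv n m r) * (\<Sum>k\<in>{1..2 * n}. sigma n y s k * sigma n y r k)
        = (if s = r then w s * sqrt (vv n m r) else 0)"
      using m r sigma_orthonormal_columns[OF y, of s r] by simp
  qed
  also have "\<dots> = coeff_inner (6 * n) a (tq_coeffs n m r)"
    using r vv_pos[OF m(1), of n r] by (simp add: w_def)
  finally show ?thesis .
qed

lemma W_space_subset_span_psi:
  assumes m: "0 < m" "m < n" and y: "bij_betw y {1..2 * n} (Y_nodes n)"
  shows "W_space n m \<subseteq> lin_span {1..2 * n} (psi n m y)"
proof
  fix f assume "f \<in> W_space n m"
  then have "f \<in> V_space (3 * n) m" and orth: "\<And>g. g \<in> V_space n m \<Longrightarrow> cheb_inner f g = 0"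
    unfolding W_space_def by auto
  then obtain c where "f = cheb_series (6 * n) (\<lambda>j. \<Sum>i<3 * n. c i * qf_coeffs (3 * n) m i j)"
    by (elim V_space_eq_cheb_series) auto
  moreover define a where "a j = (\<Sum>i<3 * n. c i * qf_coeffs (3 * n) m i j)" for j
  ultimately have f: "f = cheb_series (6 * n) a"
    by (simp add: a_def[abs_def])
  have "V_coeffs (3 * n) m a"
    unfolding a_def[abs_def] using m by (intro V_coeffs_lincomb V_coeffs_qf_coeffs) auto
  define d where "d k = coeff_inner (6 * n) a (psi_coeffs n m y k)" for k
  define B where "B = (\<lambda>j. \<Sum>k\<in>{1..2 * n}. d k * psi_coeffs n m y k j)"
  have "a j - B j = 0" for j
  proof (rule orthogonal_qf_tq_coeffs_imp_zero[OF m])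
    show "V_coeffs (3 * n) m (\<lambda>j. a j - B j)"
      unfolding B_def using m \<open>V_coeffs (3 * n) m a\<close>
      by (intro V_coeffs_diff V_coeffs_lincomb V_coeffs_psi_coeffs)
  next
    fix j assume "j < n"
    then have "coeff_inner (6 * n) a (qf_coeffs n m j) = 0"
      using orth[OF qf_in_V_space[OF \<open>j < n\<close>]] qf_eq_cheb_series[of j n "6 * n" m]
      by (simp add: f cheb_inner_cheb_series)
    with \<open>j < n\<close> m show "coeff_inner (6 * n) (\<lambda>j. a j - B j) (qf_coeffs n m j) = 0"
      by (simp add: B_def coeff_inner_diff_left coeff_inner_lincomb_left
          coeff_inner_psi_qf_coeffs)
  next
    fix r assume r: "n \<le> r" "r < 3 * n"
    have "coeff_inner (6 * n) B (tq_coeffs n m r) = coeff_inner (6 * n) a (tq_coeffs n m r)"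
      unfolding B_def d_def by (rule coeff_inner_psi_expansion_tq_coeffs[OF m y r])
    then show "coeff_inner (6 * n) (\<lambda>j. a j - B j) (tq_coeffs n m r) = 0"
      by (simp add: coeff_inner_diff_left)
  qed
  then have "f = cheb_series (6 * n) B"
    unfolding f by (intro cheb_series_cong) simp
  also have "\<dots> = (\<lambda>x. \<Sum>k\<in>{1..2 * n}. d k * psi n m y k x)"
    by (simp add: fun_eq_iff B_def cheb_series_lincomb psi_eq_cheb_series)
  finally show "f \<in> lin_span {1..2 * n} (psi n m y)"
    unfolding lin_span_def by blast
qed

theorem proposition3:
  fixes n m :: nat and y :: "nat \<Rightarrow> real"
  assumes "0 < m" and "m < n"
    and "bij_betw y {1..2 * n} (Y_nodes n)"
  shows "W_space n m = lin_span {1..2 * n} (psi n m y)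
    \<and> (\<forall>k\<in>{1..2 * n}. \<forall>h\<in>{1..2 * n}.
          cheb_inner (psi n m y k) (psi n m y h) = (if k = h then 1 else 0))"
  using equalityI[OF W_space_subset_span_psi[OF assms] span_psi_subset_W_space[OF assms(1,2)]]
    psi_orthonormal[OF assms] by simp

end
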